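(* Let $\Sigma$ be a finite alphabet with $|\Sigma|=q$, and let $X,Y\subseteq\Sigma^{\mathbb{Z}}$ be constrained systems with capacities satisfying $h(X)\le h(Y)$. Then \[R(X,Y)\ge H_q^{-1}\big(h(Y)-h(X)\big).\]
   Context: A constrained system is a set $X\subseteq\Sigma^{\mathbb{Z}}$ for which there is a finite directed graph with edges labeled by $\Sigma$ such that $X$ is the set of label sequences of bi-infinite directed paths in the graph. $\mathscr{B}_n(X)\subseteq\Sigma^n$ is the set of length-$n$ words appearing as consecutive subwords of elements of $X$. The capacity is $h(X)=\lim_{n\to\infty}\frac{1}{n}\log_q|\mathscr{B}_n(X)|$. With $d$ the Hamming distance, for $A,C\subseteq\Sigma^n$ let $R(C,A)=\max_{\overline{y}\in A}\min_{\overline{x}\in C}d(\overline{x},\overline{y})$, and $R(X,Y)=\liminf_{n\to\infty}\frac{1}{n}R(\mathscr{B}_n(X),\mathscr{B}_n(Y))$. $H_q(x)=x\log_q(q-1)-x\log_q x-(1-x)\log_q(1-x)$ (with $H_q(0)=0$), and $H_q^{-1}:[0,1]\to[0,1-\frac1q]$ is the inverse of the restriction of $H_q$ to $[0,1-\frac1q]$. *)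

theory Defs
  imports "HOL-Analysis.Analysis"
begin

text \<open>A finite directed graph with edges labelled by the alphabet 'a: a finite set of
  edges (source, label, target); vertices are natural numbers (any finite graph can be
  relabelled this way).\<close>

definition path_labels :: "(nat \<times> 'a \<times> nat) set \<Rightarrow> (int \<Rightarrow> 'a) set" where
  "path_labels E = {x. \<exists>p :: int \<Rightarrow> nat \<times> 'a \<times> nat.
      (\<forall>i. p i \<in> E) \<and>
      (\<forall>i. snd (snd (p i)) = fst (p (i + 1))) \<and>
      (\<forall>i. x i = fst (snd (p i)))}"

definition constrained_system :: "(int \<Rightarrow> 'a) set \<Rightarrow> bool" where
  "constrained_system X \<longleftrightarrow> (\<exists>E :: (nat \<times> 'a \<times> nat) set. finite E \<and> X = path_labels E)"

definition blocks :: "nat \<Rightarrow> (int \<Rightarrow> 'a) set \<Rightarrow> 'a list set" where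
  "blocks n X = {w. length w = n \<and> (\<exists>x\<in>X. \<exists>i::int. \<forall>j<n. w ! j = x (i + int j))}"

definition capacity :: "(int \<Rightarrow> 'a::finite) set \<Rightarrow> real" where
  "capacity X = lim (\<lambda>n. log (real CARD('a)) (real (card (blocks n X))) / real n)"

definition hamming :: "'a list \<Rightarrow> 'a list \<Rightarrow> nat" where
  "hamming u v = card {i. i < length u \<and> u ! i \<noteq> v ! i}"

definition cov_radius :: "'a list set \<Rightarrow> 'a list set \<Rightarrow> nat" where
  "cov_radius C A = Max ((\<lambda>y. Min ((\<lambda>x. hamming x y) ` C)) ` A)"

definition system_cov_radius :: "(int \<Rightarrow> 'a) set \<Rightarrow> (int \<Rightarrow> 'a) set \<Rightarrow> ereal" where
  "system_cov_radius X Y =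
     liminf (\<lambda>n. ereal (real (cov_radius (blocks n X) (blocks n Y)) / real n))"

definition Hq :: "real \<Rightarrow> real \<Rightarrow> real" where
  "Hq q x = (if x = 0 then 0 else
     x * log q (q - 1) - x * log q x - (1 - x) * log q (1 - x))"

definition Hq_inv :: "real \<Rightarrow> real \<Rightarrow> real" where
  "Hq_inv q y = (THE x. 0 \<le> x \<and> x \<le> 1 - 1 / q \<and> Hq q x = y)"

end

theory Submission
  imports Defs "HOL-Real_Asymp.Real_Asymp"
begin

(* The words of B_n(Y) are covered by the Hamming balls of radius r = R(B_n(X), B_n(Y)) around
   the words of B_n(X). For r/n <= 1 - 1/q such a ball has at most q^(n H_q(r/n)) elements:
   weight each word y by a^d(x,y) b^(n-d(x,y)) with a = (r/n)/(q-1) and b = 1 - r/n; then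
   b >= a, the weights of all words sum to (b + (q-1) a)^n = 1, and every word of the ball
   weighs at least a^r b^(n-r) = q^(-n H_q(r/n)). Taking logarithms,
     (1/n) log_q |B_n(Y)| <= (1/n) log_q |B_n(X)| + H_q(r/n).
   Both normalised block counts converge to the capacities (Fekete's lemma, since block counts
   are submultiplicative), and H_q is strictly increasing on [0, 1 - 1/q]; so r/n <= c
   is impossible for large n whenever H_q(c) < h(Y) - h(X). *)

section \<open>The q-ary entropy function\<close>

lemma Hq_eq: "Hq q x = x * log q (q - 1) - x * log q x - (1 - x) * log q (1 - x)"
  by (simp add: Hq_def)

lemma Hq_0 [simp]: "Hq q 0 = 0"
  by (simp add: Hq_def)

lemma continuous_on_x_ln_x: "continuous_on {0..} (\<lambda>x::real. x * ln x)"
proof (rule continuous_on_eq_continuous_within[THEN iffD2], intro ballI)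
  fix x :: real assume "x \<in> {0..}"
  show "continuous (at x within {0..}) (\<lambda>x. x * ln x)"
  proof (cases "x = 0")
    case True
    have "((\<lambda>x::real. x * ln x) \<longlongrightarrow> 0) (at_right 0)" by real_asymp
    then show ?thesis using True by (simp add: continuous_within at_within_Ici_at_right)
  next
    case False
    with \<open>x \<in> {0..}\<close> have "isCont (\<lambda>x. x * ln x) x" by (auto intro!: continuous_intros)
    then show ?thesis by (rule continuous_at_imp_continuous_within)
  qed
qed

lemma Hq_continuous_on: "continuous_on {0..1} (Hq q)"
proof -
  have "Hq q = (\<lambda>x. x * log q (q - 1) - (x * ln x) * inverse (ln q)
      - ((1 - x) * ln (1 - x)) * inverse (ln q))"
    by (simp add: Hq_eq log_def fun_eq_iff divide_inverse)
  moreover have "continuous_on {0..1} (\<lambda>x::real. (1 - x) * ln (1 - x))"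
    by (rule continuous_on_compose2[OF continuous_on_x_ln_x, of _ "\<lambda>x. 1 - x"])
      (auto intro!: continuous_intros)
  ultimately show ?thesis
    using continuous_on_subset[OF continuous_on_x_ln_x, of "{0..1}"]
    by (auto intro!: continuous_intros)
qed

lemma Hq_has_real_derivative:
  assumes "q > 1" "0 < x" "x < 1"
  shows "(Hq q has_real_derivative ln ((q - 1) * (1 - x) / x) / ln q) (at x)"
proof -
  have "Hq q = (\<lambda>x. x * log q (q - 1) - x * ln x / ln q - (1 - x) * ln (1 - x) / ln q)"
    by (simp add: Hq_eq log_def fun_eq_iff)
  moreover have "((\<lambda>x. x * log q (q - 1) - x * ln x / ln q - (1 - x) * ln (1 - x) / ln q)
      has_real_derivative log q (q - 1) - (ln x + 1) / ln q - (- ln (1 - x) - 1) / ln q) (at x)"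
    using assms by (auto intro!: derivative_eq_intros)
  moreover have "log q (q - 1) - (ln x + 1) / ln q - (- ln (1 - x) - 1) / ln q
      = ln ((q - 1) * (1 - x) / x) / ln q"
    using assms by (simp add: log_def ln_mult ln_div diff_divide_distrib add_divide_distrib)
  ultimately show ?thesis by simp
qed

lemma Hq_strict_mono_on:
  assumes "q > 1"
  shows "strict_mono_on {0..1 - 1 / q} (Hq q)"
proof (rule strict_mono_onI)
  fix x y assume xy: "x \<in> {0..1 - 1 / q}" "y \<in> {0..1 - 1 / q}" "x < y"
  have "1 / q > 0" using assms by simp
  have "0 \<le> x" "y \<le> 1 - 1 / q" using xy by auto
  then have "y < 1" using \<open>1 / q > 0\<close> by linarith
  show "Hq q x < Hq q y"
  proof (rule DERIV_pos_imp_increasing_open[OF \<open>x < y\<close>])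
    fix z assume z: "x < z" "z < y"
    have z01: "0 < z" "z < 1" using z \<open>0 \<le> x\<close> \<open>y < 1\<close> by linarith+
    have "q * z < q * y" using z assms by simp
    moreover have "q * y \<le> q - 1" using xy assms by (simp add: field_simps)
    ultimately have "z * q < q - 1" by (simp add: mult.commute)
    then have "(q - 1) * (1 - z) / z > 1" using z01 by (simp add: field_simps)
    then have "ln ((q - 1) * (1 - z) / z) / ln q > 0" using assms by simp
    then show "\<exists>d. (Hq q has_real_derivative d) (at z) \<and> d > 0"
      using Hq_has_real_derivative[OF assms z01] by blast
  next
    show "continuous_on {x..y} (Hq q)"
      by (rule continuous_on_subset[OF Hq_continuous_on]) (use \<open>0 \<le> x\<close> \<open>y < 1\<close> in auto)
  qed
qed

lemma Hq_max_value:
  assumes "q > 1"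
  shows "Hq q (1 - 1 / q) = 1"
proof -
  have "1 - 1 / q = (q - 1) / q" "1 - (q - 1) / q = 1 / q"
    using assms by (simp_all add: field_simps)
  then have "Hq q (1 - 1 / q)
      = (q - 1) / q * log q (q - 1) - (q - 1) / q * log q ((q - 1) / q) - 1 / q * log q (1 / q)"
    by (simp only: Hq_eq)
  also have "\<dots> = 1"
    using assms \<open>1 - (q - 1) / q = 1 / q\<close> by (simp add: log_divide algebra_simps)
  finally show ?thesis .
qed

lemma Hq_inv:
  assumes "q > 1" "0 \<le> v" "v \<le> 1"
  shows "0 \<le> Hq_inv q v \<and> Hq_inv q v \<le> 1 - 1 / q \<and> Hq q (Hq_inv q v) = v"
proof -
  have "1 / q > 0" "1 / q < 1" using assms by simp_all
  have "continuous_on {0..1 - 1 / q} (Hq q)"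
    by (rule continuous_on_subset[OF Hq_continuous_on]) (use \<open>1 / q > 0\<close> in auto)
  then have "\<exists>x. 0 \<le> x \<and> x \<le> 1 - 1 / q \<and> Hq q x = v"
    using assms \<open>1 / q < 1\<close> Hq_max_value by (intro IVT') auto
  moreover have "inj_on (Hq q) {0..1 - 1 / q}"
    by (rule strict_mono_on_imp_inj_on[OF Hq_strict_mono_on[OF assms(1)]])
  ultimately have "\<exists>!x. 0 \<le> x \<and> x \<le> 1 - 1 / q \<and> Hq q x = v"
    by (auto simp: inj_on_def)
  then show ?thesis unfolding Hq_inv_def by (rule theI')
qed

section \<open>Volume of Hamming balls\<close>

lemma hamming_le_length: "hamming u v \<le> length u"
  unfolding hamming_def by (rule card_mono[of "{..<length u}", simplified]) auto

lemma hamming_Cons: "hamming (a # u) (b # v) = (if a = b then 0 else 1) + hamming u v"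
proof -
  have "{i. i < length (a # u) \<and> (a # u) ! i \<noteq> (b # v) ! i}
      = (if a = b then {} else {0}) \<union> Suc ` {i. i < length u \<and> u ! i \<noteq> v ! i}"
    (is "?L = ?R")
  proof (rule set_eqI)
    show "i \<in> ?L \<longleftrightarrow> i \<in> ?R" for i by (cases i) auto
  qed
  moreover have "card ((if a = b then {} else {0}) \<union> Suc ` {i. i < length u \<and> u ! i \<noteq> v ! i})
      = card (if a = b then {} else {0::nat}) + card (Suc ` {i. i < length u \<and> u ! i \<noteq> v ! i})"
    by (rule card_Un_disjoint) auto
  ultimately show ?thesis
    unfolding hamming_def by (simp add: card_image)
qed

lemma sum_if_eq_UNIV:
  "(\<Sum>d\<in>(UNIV :: 'a::finite set). if c = d then b else a) = b + (real CARD('a) - 1) * a"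
proof -
  have "(\<Sum>d\<in>UNIV. if c = d then b else a) = b + (\<Sum>d\<in>UNIV - {c}. a)"
    by (subst sum.remove[of _ c]) (auto intro!: sum.cong)
  moreover have "real (card (UNIV - {c :: 'a})) = real CARD('a) - 1"
    by (simp add: card_Diff_singleton of_nat_diff Suc_le_eq)
  ultimately show ?thesis by simp
qed

lemma sum_hamming_weights:
  fixes x :: "'a::finite list" and a b :: real
  shows "(\<Sum>y | length y = length x. a ^ hamming x y * b ^ (length x - hamming x y))
    = (b + (real CARD('a) - 1) * a) ^ length x"
proof (induction x)
  case Nil
  then show ?case by (simp add: hamming_def)
next
  case (Cons c x)
  let ?w = "\<lambda>x y. a ^ hamming x y * b ^ (length x - hamming x y)"
  have w_Cons: "?w (c # x) (d # y) = (if c = d then b else a) * ?w x y"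
    if "length y = length x" for d y
    using hamming_le_length[of x y] by (simp add: hamming_Cons Suc_diff_le)
  have words_Suc: "{y. length y = length (c # x)} = (\<lambda>(d, y). d # y) ` (UNIV \<times> {y. length y = length x})"
    by (auto simp: length_Suc_conv)
  have "(\<Sum>y | length y = length (c # x). ?w (c # x) y)
      = (\<Sum>(d, y) \<in> UNIV \<times> {y. length y = length x}. ?w (c # x) (d # y))"
    unfolding words_Suc by (subst sum.reindex) (auto simp: inj_on_def intro!: sum.cong)
  also have "\<dots> = (\<Sum>(d, y) \<in> UNIV \<times> {y. length y = length x}. (if c = d then b else a) * ?w x y)"
    by (rule sum.cong) (use w_Cons in auto)
  also have "\<dots> = (\<Sum>d\<in>UNIV. \<Sum>y | length y = length x. (if c = d then b else a) * ?w x y)"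
    by (rule sum.cartesian_product[symmetric])
  also have "\<dots> = (b + (real CARD('a) - 1) * a) * (\<Sum>y | length y = length x. ?w x y)"
    by (simp add: sum_distrib_left[symmetric] sum_distrib_right[symmetric] sum_if_eq_UNIV)
  finally show ?case by (simp add: Cons.IH)
qed

lemma power_mult_power_diff_antimono:
  fixes a b :: real
  assumes "0 \<le> a" "a \<le> b" "d \<le> r" "r \<le> n"
  shows "a ^ r * b ^ (n - r) \<le> a ^ d * b ^ (n - d)"
proof -
  have "a ^ r * b ^ (n - r) = a ^ d * (a ^ (r - d) * b ^ (n - r))"
    using assms by (simp flip: power_add mult.assoc)
  also have "\<dots> \<le> a ^ d * (b ^ (r - d) * b ^ (n - r))"
    using assms by (intro mult_left_mono mult_right_mono power_mono) auto
  also have "\<dots> = a ^ d * b ^ (n - d)"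
    using assms by (simp flip: power_add)
  finally show ?thesis .
qed

lemma powr_neg_Hq:
  fixes r n :: nat
  assumes "q > 1" "r < n"
  defines "p \<equiv> real r / real n"
  shows "(p / (q - 1)) ^ r * (1 - p) ^ (n - r) = q powr (- (real n * Hq q p))"
proof (cases "r = 0")
  case True
  then show ?thesis using assms by (simp add: p_def)
next
  case False
  have p: "0 < p" "p < 1" using assms False by (simp_all add: p_def)
  have "log q ((p / (q - 1)) ^ r * (1 - p) ^ (n - r))
      = real r * (log q p - log q (q - 1)) + real (n - r) * log q (1 - p)"
    using assms p by (simp add: log_mult log_nat_power log_divide)
  also have "\<dots> = - (real n * Hq q p)"
    using assms by (simp add: Hq_eq p_def of_nat_diff field_simps)
  finally have "log q ((p / (q - 1)) ^ r * (1 - p) ^ (n - r)) = - (real n * Hq q p)" .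
  moreover have "0 < (p / (q - 1)) ^ r * (1 - p) ^ (n - r)"
    using assms(1) p by simp
  ultimately show ?thesis
    using powr_log_cancel[of q] assms(1) by fastforce
qed

lemma card_hamming_ball_le:
  fixes x :: "'a::finite list"
  defines "q \<equiv> real CARD('a)" and "n \<equiv> length x"
  assumes "2 \<le> CARD('a)" "0 < n" "real r \<le> (1 - 1 / q) * real n"
  shows "real (card {y. length y = n \<and> hamming x y \<le> r}) \<le> q powr (real n * Hq q (real r / real n))"
proof -
  define p where "p = real r / real n"
  define a where "a = p / (q - 1)"
  define b where "b = 1 - p"
  let ?ball = "{y. length y = n \<and> hamming x y \<le> r}"
  have q: "q > 1" using assms(3) by (simp add: q_def)
  have "p \<le> 1 - 1 / q" using assms(4,5) by (simp add: p_def field_simps)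
  moreover have "1 / q > 0" using q by simp
  ultimately have "p < 1" by linarith
  have "a \<le> b" using \<open>p \<le> 1 - 1 / q\<close> q by (simp add: a_def b_def field_simps)
  have "0 \<le> a" using q by (simp add: a_def p_def)
  have "r < n" using \<open>p < 1\<close> assms(4) by (simp add: p_def)
  have weight_ball: "a ^ r * b ^ (n - r) \<le> a ^ hamming x y * b ^ (n - hamming x y)" if "y \<in> ?ball" for y
    using that \<open>0 \<le> a\<close> \<open>a \<le> b\<close> \<open>r < n\<close> by (intro power_mult_power_diff_antimono) auto
  have "real (card ?ball) * (a ^ r * b ^ (n - r)) \<le> (\<Sum>y\<in>?ball. a ^ hamming x y * b ^ (n - hamming x y))"
    using sum_mono[of ?ball "\<lambda>_. a ^ r * b ^ (n - r)", OF weight_ball] by simp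
  also have "\<dots> \<le> (\<Sum>y | length y = n. a ^ hamming x y * b ^ (n - hamming x y))"
    using \<open>0 \<le> a\<close> \<open>a \<le> b\<close> by (intro sum_mono2 finite_list_length) auto
  also have "\<dots> = 1"
    using sum_hamming_weights[of a x b] q by (simp add: n_def q_def a_def b_def)
  finally have "real (card ?ball) * q powr (- (real n * Hq q p)) \<le> 1"
    using powr_neg_Hq[OF q \<open>r < n\<close>] by (simp add: a_def b_def p_def)
  then show ?thesis
    using q by (simp add: p_def powr_minus field_simps)
qed

section \<open>Block counts and capacity\<close>

lemma subadditive_convergent:
  fixes f :: "nat \<Rightarrow> real"
  assumes subadd: "\<And>m n. f (m + n) \<le> f m + f n" and nonneg: "\<And>n. 0 \<le> f n"
  shows "convergent (\<lambda>n. f n / real n)"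
proof -
  define l where "l = (INF n\<in>{1..}. f n / real n)"
  have bdd: "bdd_below ((\<lambda>n. f n / real n) ` {1..})"
    using nonneg by (intro bdd_belowI[of _ 0]) auto
  have l_le: "l \<le> f n / real n" if "n \<ge> 1" for n
    unfolding l_def using that bdd by (intro cINF_lower) auto
  have iterate: "f (k * m + s) \<le> real k * f m + f s" for k m s
  proof (induction k)
    case (Suc k)
    have "f (Suc k * m + s) \<le> f m + f (k * m + s)"
      using subadd[of m "k * m + s"] by (simp add: algebra_simps)
    with Suc show ?case by (simp add: algebra_simps)
  qed simp
  have "(\<lambda>n. f n / real n) \<longlonglongrightarrow> l"
  proof (rule LIMSEQ_I)
    fix \<epsilon> :: real assume "\<epsilon> > 0"
    then obtain m where m: "m \<ge> 1" "f m / real m < l + \<epsilon> / 2"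
      using cINF_less_iff[OF _ bdd, of "l + \<epsilon> / 2"] unfolding l_def by auto
    define C where "C = Max (f ` {..<m})"
    have C: "f s \<le> C" if "s < m" for s
      unfolding C_def using that by (intro Max_ge) auto
    have "0 \<le> C" using C[of 0] nonneg[of 0] m by simp
    obtain N :: nat where N: "N > 2 * C / \<epsilon>" using reals_Archimedean2 by blast
    have "norm (f n / real n - l) < \<epsilon>" if n: "n \<ge> max 1 N" for n
    proof -
      have "f n \<le> real (n div m) * f m + C"
        using iterate[of "n div m" m "n mod m"] C[of "n mod m"] m by simp
      also have "real (n div m) * f m \<le> real n / real m * f m"
        using m nonneg[of m] by (intro mult_right_mono) (simp_all add: le_divide_eq flip: of_nat_mult)
      finally have "f n / real n \<le> f m / real m + C / real n"
        using n by (simp add: field_simps)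
      moreover have "2 * C / \<epsilon> < real n"
        using N n of_nat_mono[of N n] by simp
      then have "C / real n < \<epsilon> / 2"
        using n \<open>\<epsilon> > 0\<close> by (simp add: field_simps)
      ultimately have "f n / real n < l + \<epsilon>"
        using m(2) by linarith
      then show ?thesis
        using l_le[of n] n by simp
    qed
    then show "\<exists>N. \<forall>n\<ge>N. norm (f n / real n - l) < \<epsilon>" by blast
  qed
  then show ?thesis by (rule convergentI)
qed

lemma length_blocks: "w \<in> blocks n X \<Longrightarrow> length w = n"
  by (simp add: blocks_def)

lemma finite_blocks: "finite (blocks n (X :: (int \<Rightarrow> 'a::finite) set))"
  by (rule finite_subset[OF _ finite_list_length[of n]]) (auto simp: blocks_def)

lemma blocks_nonempty:
  assumes "X \<noteq> {}"
  shows "blocks n X \<noteq> {}"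
proof -
  obtain x where "x \<in> X" using assms by blast
  then have "map (\<lambda>j. x (int j)) [0..<n] \<in> blocks n X"
    unfolding blocks_def by (auto intro!: exI[of _ 0])
  then show ?thesis by blast
qed

lemma card_blocks_le: "card (blocks n (X :: (int \<Rightarrow> 'a::finite) set)) \<le> CARD('a) ^ n"
proof -
  have "card (blocks n X) \<le> card {w. set w \<subseteq> (UNIV :: 'a set) \<and> length w = n}"
    by (rule card_mono) (auto simp: finite_list_length blocks_def)
  then show ?thesis by (simp only: card_lists_length_eq[OF finite_class.finite_UNIV])
qed

lemma card_blocks_add_le:
  "card (blocks (m + n) (X :: (int \<Rightarrow> 'a::finite) set)) \<le> card (blocks m X) * card (blocks n X)"
proof -
  let ?split = "\<lambda>w. (take m w, drop m w)"
  have "?split ` blocks (m + n) X \<subseteq> blocks m X \<times> blocks n X"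
  proof (rule image_subsetI)
    fix w assume "w \<in> blocks (m + n) X"
    then obtain x i where w: "length w = m + n" "x \<in> X" "\<forall>j<m + n. w ! j = x (i + int j)"
      unfolding blocks_def by blast
    have "take m w \<in> blocks m X"
      using w unfolding blocks_def by (auto intro!: bexI[of _ x] exI[of _ i])
    moreover have "drop m w \<in> blocks n X"
      using w unfolding blocks_def by (auto intro!: bexI[of _ x] exI[of _ "i + int m"] simp: algebra_simps)
    ultimately show "?split w \<in> blocks m X \<times> blocks n X" by simp
  qed
  moreover have "inj_on ?split (blocks (m + n) X)"
    by (rule inj_onI) (metis append_take_drop_id prod.inject)
  ultimately have "card (blocks (m + n) X) \<le> card (blocks m X \<times> blocks n X)"
    by (metis card_inj_on_le finite_SigmaI finite_blocks)
  then show ?thesis by (simp add: card_cartesian_product)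
qed

lemma card_blocks_pos: "X \<noteq> {} \<Longrightarrow> 0 < card (blocks n (X :: (int \<Rightarrow> 'a::finite) set))"
  by (simp add: card_gt_0_iff blocks_nonempty finite_blocks)

definition block_entropy :: "(int \<Rightarrow> 'a::finite) set \<Rightarrow> nat \<Rightarrow> real" where
  "block_entropy X n = log (real CARD('a)) (real (card (blocks n X))) / real n"

lemma log_card_blocks_nonneg:
  fixes X :: "(int \<Rightarrow> 'a::finite) set"
  assumes "2 \<le> CARD('a)" "X \<noteq> {}"
  shows "0 \<le> log (real CARD('a)) (real (card (blocks n X)))"
  using assms card_blocks_pos[OF assms(2), of n] by (simp add: Suc_le_eq)

lemma log_card_blocks_le:
  fixes X :: "(int \<Rightarrow> 'a::finite) set"
  assumes "2 \<le> CARD('a)" "X \<noteq> {}"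
  shows "log (real CARD('a)) (real (card (blocks n X))) \<le> real n"
proof -
  have "log (real CARD('a)) (real (card (blocks n X)))
      \<le> log (real CARD('a)) (real CARD('a) ^ n)"
    using assms(1) card_blocks_pos[OF assms(2)] card_blocks_le[of n X] by (intro log_mono) (auto simp flip: of_nat_power)
  also have "\<dots> = real n"
    using assms(1) by (simp add: log_nat_power)
  finally show ?thesis .
qed

lemma log_card_blocks_add_le:
  fixes X :: "(int \<Rightarrow> 'a::finite) set"
  assumes "2 \<le> CARD('a)" "X \<noteq> {}"
  shows "log (real CARD('a)) (real (card (blocks (m + n) X)))
    \<le> log (real CARD('a)) (real (card (blocks m X))) + log (real CARD('a)) (real (card (blocks n X)))"
proof -
  note pos = card_blocks_pos[OF assms(2)]
  have "real (card (blocks (m + n) X)) \<le> real (card (blocks m X)) * real (card (blocks n X))"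
    using card_blocks_add_le[of m n X] by (simp flip: of_nat_mult)
  then have "log (real CARD('a)) (real (card (blocks (m + n) X)))
      \<le> log (real CARD('a)) (real (card (blocks m X)) * real (card (blocks n X)))"
    using assms(1) pos[of "m + n"] by (intro log_mono) auto
  also have "\<dots> = log (real CARD('a)) (real (card (blocks m X))) + log (real CARD('a)) (real (card (blocks n X)))"
    using pos[of m] pos[of n] by (simp add: log_mult)
  finally show ?thesis .
qed

lemma block_entropy_LIMSEQ:
  fixes X :: "(int \<Rightarrow> 'a::finite) set"
  assumes "2 \<le> CARD('a)" "X \<noteq> {}"
  shows "block_entropy X \<longlonglongrightarrow> capacity X"
proof -
  have "convergent (block_entropy X)"
    unfolding block_entropy_def
    by (rule subadditive_convergent) (use log_card_blocks_add_le[OF assms] log_card_blocks_nonneg[OF assms] in auto)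
  then show ?thesis
    by (simp add: capacity_def block_entropy_def[abs_def] convergent_LIMSEQ_iff)
qed

lemma capacity_nonneg:
  fixes X :: "(int \<Rightarrow> 'a::finite) set"
  assumes "2 \<le> CARD('a)" "X \<noteq> {}"
  shows "0 \<le> capacity X"
  using LIMSEQ_le_const[OF block_entropy_LIMSEQ[OF assms]] log_card_blocks_nonneg[OF assms]
  by (auto simp: block_entropy_def)

lemma capacity_le_1:
  fixes X :: "(int \<Rightarrow> 'a::finite) set"
  assumes "2 \<le> CARD('a)" "X \<noteq> {}"
  shows "capacity X \<le> 1"
proof (rule LIMSEQ_le_const2[OF block_entropy_LIMSEQ[OF assms]])
  show "\<exists>N. \<forall>n\<ge>N. block_entropy X n \<le> 1"
    using log_card_blocks_le[OF assms] by (auto simp: block_entropy_def intro!: exI[of _ 1])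
qed

section \<open>Covering radius versus capacity\<close>

lemma ex_hamming_le_cov_radius:
  assumes "finite C" "C \<noteq> {}" "finite A" "y \<in> A"
  shows "\<exists>x\<in>C. hamming x y \<le> cov_radius C A"
proof -
  have "Min ((\<lambda>x. hamming x y) ` C) \<in> (\<lambda>x. hamming x y) ` C"
    using assms(1,2) by (intro Min_in) auto
  then obtain x where "x \<in> C" "hamming x y = Min ((\<lambda>x. hamming x y) ` C)"
    by auto
  moreover have "Min ((\<lambda>x. hamming x y) ` C) \<le> cov_radius C A"
    unfolding cov_radius_def using assms(3,4) by (intro Max_ge) auto
  ultimately show ?thesis by metis
qed

lemma card_blocks_le_powr_Hq:
  fixes X Y :: "(int \<Rightarrow> 'a::finite) set" and n :: nat
  defines "q \<equiv> real CARD('a)" and "\<rho> \<equiv> real (cov_radius (blocks n X) (blocks n Y)) / real n"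
  assumes "2 \<le> CARD('a)" "X \<noteq> {}" "0 < n" "\<rho> \<le> 1 - 1 / q"
  shows "real (card (blocks n Y)) \<le> real (card (blocks n X)) * q powr (real n * Hq q \<rho>)"
proof -
  define r where "r = cov_radius (blocks n X) (blocks n Y)"
  define ball where "ball x = {y. length y = n \<and> hamming x y \<le> r}" for x :: "'a list"
  have "blocks n Y \<subseteq> (\<Union>x\<in>blocks n X. ball x)"
    using ex_hamming_le_cov_radius[OF finite_blocks blocks_nonempty[OF \<open>X \<noteq> {}\<close>] finite_blocks]
    by (fastforce simp: ball_def r_def dest: length_blocks)
  then have "card (blocks n Y) \<le> card (\<Union>x\<in>blocks n X. ball x)"
    by (rule card_mono[rotated]) (auto simp: ball_def finite_blocks finite_list_length)
  also have "\<dots> \<le> (\<Sum>x\<in>blocks n X. card (ball x))"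
    by (rule card_UN_le[OF finite_blocks])
  finally have "real (card (blocks n Y)) \<le> (\<Sum>x\<in>blocks n X. real (card (ball x)))"
    by (simp flip: of_nat_sum)
  also have "\<dots> \<le> (\<Sum>x\<in>blocks n X. q powr (real n * Hq q \<rho>))"
  proof (rule sum_mono)
    fix x assume "x \<in> blocks n X"
    then have "length x = n" by (rule length_blocks)
    moreover have "real r \<le> (1 - 1 / q) * real n"
      using \<open>0 < n\<close> \<open>\<rho> \<le> 1 - 1 / q\<close> by (simp add: r_def \<rho>_def field_simps)
    ultimately show "real (card (ball x)) \<le> q powr (real n * Hq q \<rho>)"
      using card_hamming_ball_le[of x r] \<open>2 \<le> CARD('a)\<close> \<open>0 < n\<close>
      by (simp add: ball_def r_def q_def \<rho>_def)
  qed
  finally show ?thesis by simp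
qed

lemma block_entropy_le_Hq:
  fixes X Y :: "(int \<Rightarrow> 'a::finite) set" and n :: nat
  defines "q \<equiv> real CARD('a)" and "\<rho> \<equiv> real (cov_radius (blocks n X) (blocks n Y)) / real n"
  assumes "2 \<le> CARD('a)" "X \<noteq> {}" "Y \<noteq> {}" "0 < n" "\<rho> \<le> 1 - 1 / q"
  shows "block_entropy Y n \<le> block_entropy X n + Hq q \<rho>"
proof -
  have "q > 1" using assms(3) by (simp add: q_def)
  have "log q (real (card (blocks n Y)))
      \<le> log q (real (card (blocks n X)) * q powr (real n * Hq q \<rho>))"
    using \<open>q > 1\<close> card_blocks_pos[OF \<open>Y \<noteq> {}\<close>] card_blocks_le_powr_Hq[of X n Y] assms(3-7)
    by (intro log_mono) (auto simp: q_def \<rho>_def)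
  also have "\<dots> = log q (real (card (blocks n X))) + real n * Hq q \<rho>"
    using \<open>q > 1\<close> card_blocks_pos[OF \<open>X \<noteq> {}\<close>] by (simp add: log_mult)
  finally show ?thesis
    using \<open>0 < n\<close> by (simp add: block_entropy_def q_def field_simps)
qed

lemma eventually_cov_radius_gt:
  fixes X Y :: "(int \<Rightarrow> 'a::finite) set"
  defines "q \<equiv> real CARD('a)"
  assumes card: "2 \<le> CARD('a)" and X: "X \<noteq> {}" and Y: "Y \<noteq> {}"
    and "0 \<le> c" "c \<le> 1 - 1 / q" and gap: "Hq q c < capacity Y - capacity X"
  shows "\<forall>\<^sub>F n in sequentially. c < real (cov_radius (blocks n X) (blocks n Y)) / real n"
proof -
  have q: "q > 1" using card by (simp add: q_def)
  have "(\<lambda>n. block_entropy Y n - block_entropy X n) \<longlonglongrightarrow> capacity Y - capacity X"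
    using block_entropy_LIMSEQ card X Y by (intro tendsto_diff)
  then have "\<forall>\<^sub>F n in sequentially. Hq q c < block_entropy Y n - block_entropy X n"
    using gap by (rule order_tendstoD)
  moreover have "c < real (cov_radius (blocks n X) (blocks n Y)) / real n"
    if "Hq q c < block_entropy Y n - block_entropy X n" "0 < n" for n
  proof (rule ccontr)
    let ?\<rho> = "real (cov_radius (blocks n X) (blocks n Y)) / real n"
    assume "\<not> c < ?\<rho>"
    then have "?\<rho> \<in> {0..1 - 1 / q}" "?\<rho> \<le> c" using \<open>c \<le> 1 - 1 / q\<close> by auto
    then have "Hq q ?\<rho> \<le> Hq q c"
      using \<open>0 \<le> c\<close> \<open>c \<le> 1 - 1 / q\<close> by (intro strict_mono_on_leD[OF Hq_strict_mono_on[OF q]]) auto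
    moreover have "block_entropy Y n \<le> block_entropy X n + Hq q ?\<rho>"
      using block_entropy_le_Hq card X Y \<open>0 < n\<close> \<open>?\<rho> \<in> {0..1 - 1 / q}\<close> by (auto simp: q_def)
    ultimately show False
      using that(1) by simp
  qed
  ultimately show ?thesis
    by (auto elim: eventually_mono[OF eventually_conj[OF _ eventually_gt_at_top[of 0]]])
qed

lemma system_cov_radius_ge:
  fixes X Y :: "(int \<Rightarrow> 'a::finite) set"
  defines "q \<equiv> real CARD('a)"
  assumes "2 \<le> CARD('a)" "X \<noteq> {}" "Y \<noteq> {}"
    and "0 \<le> t" "t \<le> 1 - 1 / q" "Hq q t \<le> capacity Y - capacity X"
  shows "ereal t \<le> system_cov_radius X Y"
  unfolding system_cov_radius_def le_Liminf_iff
proof (intro allI impI)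
  fix y assume "y < ereal t"
  show "\<forall>\<^sub>F n in sequentially. y < ereal (real (cov_radius (blocks n X) (blocks n Y)) / real n)"
  proof (cases y)
    case (real c)
    show ?thesis
    proof (cases "c < 0")
      case True
      then show ?thesis using real by (auto intro!: always_eventually less_le_trans[OF True])
    next
      case False
      have "q > 1" using assms(2) by (simp add: q_def)
      then have "Hq q c < Hq q t"
        using False real \<open>y < ereal t\<close> assms(6) by (intro strict_mono_onD[OF Hq_strict_mono_on]) auto
      then show ?thesis
        using eventually_cov_radius_gt[OF assms(2-4), of c] False real \<open>y < ereal t\<close> assms(6,7)
        by (auto simp: q_def)
    qed
  qed (use \<open>y < ereal t\<close> in auto)
qed

theorem proposition10:
  fixes X Y :: "(int \<Rightarrow> 'a::finite) set"
  assumes "CARD('a) \<ge> 2"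
    and "constrained_system X" and "constrained_system Y"
    and "X \<noteq> {}" and "Y \<noteq> {}"
    and "capacity X \<le> capacity Y"
  shows "ereal (Hq_inv (real CARD('a)) (capacity Y - capacity X)) \<le> system_cov_radius X Y"
proof -
  have "real CARD('a) > 1" using assms(1) by simp
  moreover have "0 \<le> capacity Y - capacity X" "capacity Y - capacity X \<le> 1"
    using assms(6) capacity_nonneg[OF assms(1,4)] capacity_le_1[OF assms(1,5)] by auto
  ultimately show ?thesis
    using Hq_inv system_cov_radius_ge[OF assms(1,4,5)] by simp
qed

end
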